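(* Let $F\neq\mathbb{RP}^2$ be a surface, $D$ a link diagram in $F$ with ordered crossings, and $\bar D$ its mirror image (all crossings switched), with crossings ordered consistently: if $v$ is the $i$-th crossing of $D$ then the corresponding crossing $\bar v$ is the $i$-th crossing of $\bar D$. Let $\varphi:C_{ijs}(D)\to C_{-i,-j,-s}(\bar D)$ send an enhanced state $S$ of $D$ to the enhanced state $\varphi(S)$ of $\bar D$ in which each crossing $\bar v$ receives the marker opposite to the marker of $v$ in $S$ (so that the circles of $S$ and $\varphi(S)$ are naturally identified) and every circle receives the label opposite to its label in $S$. Then $\varphi\circ\tilde d=d^+\circ\varphi$ as maps $C_{ijs}(D)\to C_{-i-2,-j,-s}(\bar D)$, where $\tilde d(S)=\sum_{S'}\sum_v(-1)^{t(S,v)}[S':S]_vS'$ (sum over enhanced states $S'$ of $D$ and crossings $v$ of $D$) and $d^+$ on $C(\bar D)$ is $d^+(T)=\sum_{w}(-1)^{t^+(T,w)}d_w(T)$.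
   Context: A link diagram in $F$ is a finite collection of generically immersed closed curves with finitely many crossings with over/under information. The $(+1)$-/$(-1)$-smoothing of a crossing is the one with coefficient $A$/$A^{-1}$ in $L_p=AL_0+A^{-1}L_\infty$. An enhanced state assigns markers $\pm1$ to crossings and labels $\pm$ to the resulting circles. A circle is trivial if it bounds a disk in $F$, bounding if it bounds a disk or a Möbius band; $\mathcal C(F)$ = unoriented unbounding simple closed curves in $F$ up to homotopy. $I(S)=\#\{+1\}-\#\{-1\}$ markers, $\tau(S)=\#$(trivial circles labeled $+$)$-\#$(trivial labeled $-$), $J=I+2\tau$, $\Psi(S)=\sum\varepsilon_k\gamma_k\in\mathbb Z\mathcal C(F)$ over unbounding circles with labels $\varepsilon_k$. $C_{ijs}(D)$ is free abelian on enhanced states with $(I,J,\Psi)=(i,j,s)$. $[S:S']_v=1$ iff (a) $v$ has marker $+1$ in $S$ and $-1$ in $S'$, (b) other markers agree, (c) circles common to $S,S'$ have equal labels, (d) $J(S)=J(S')$, $\Psi(S)=\Psi(S')$; else $0$. $d_v(S)=\sum_{S'}[S:S']_vS'$; $t(S,v)$ (resp. $t^+(S,v)$) = number of $-1$ (resp. $+1$) markers of $S$ at crossings greater than $v$. *)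

theory Defs
  imports Main
begin

text \<open>Abstract combinatorial model of a link diagram D in a surface F.
  Crossings are 0..<ncr D, ordered by the natural order on nat.
  A marker assignment is a function sigma :: nat => int with sigma v in {1,-1}
  for v < ncr D and sigma v = 0 otherwise.  circles D sigma is the set of circles
  of the smoothing of D determined by sigma (circles are abstract objects of type 'c,
  so that a circle common to two smoothings is literally the same object).
  trivial c: c bounds a disk in F; bounding c: c bounds a disk or a Moebius band;
  hclass c: the element of C(F) (unoriented homotopy class) represented by c
  (only used when c is unbounding).\<close>

record ('c, 'g) diagram =
  ncr :: nat
  circles :: "(nat \<Rightarrow> int) \<Rightarrow> 'c set"
  trivial :: "'c \<Rightarrow> bool"
  bounding :: "'c \<Rightarrow> bool"
  hclass :: "'c \<Rightarrow> 'g"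

type_synonym 'c estate = "(nat \<Rightarrow> int) \<times> ('c \<Rightarrow> int)"

definition markers :: "('c,'g) diagram \<Rightarrow> (nat \<Rightarrow> int) set" where
  "markers D = {\<sigma>. (\<forall>v<ncr D. \<sigma> v = 1 \<or> \<sigma> v = -1) \<and> (\<forall>v. ncr D \<le> v \<longrightarrow> \<sigma> v = 0)}"

definition wf_diagram :: "('c,'g) diagram \<Rightarrow> bool" where
  "wf_diagram D \<longleftrightarrow> (\<forall>\<sigma>\<in>markers D. finite (circles D \<sigma>))
     \<and> (\<forall>c. trivial D c \<longrightarrow> bounding D c)"

text \<open>Mirror image: switching every crossing exchanges the (+1)- and (-1)-smoothings,
  so the smoothing of the mirror with markers sigma is the smoothing of D with markers -sigma.
  The i-th crossing of the mirror corresponds to the i-th crossing of D.\<close>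
definition mirror :: "('c,'g) diagram \<Rightarrow> ('c,'g) diagram" where
  "mirror D = D\<lparr>circles := (\<lambda>\<sigma>. circles D (\<lambda>v. - \<sigma> v))\<rparr>"

definition estates :: "('c,'g) diagram \<Rightarrow> 'c estate set" where
  "estates D = {(\<sigma>, lab). \<sigma> \<in> markers D \<and> (\<forall>c\<in>circles D \<sigma>. lab c = 1 \<or> lab c = -1)
                       \<and> (\<forall>c. c \<notin> circles D \<sigma> \<longrightarrow> lab c = 0)}"

definition Ist :: "('c,'g) diagram \<Rightarrow> 'c estate \<Rightarrow> int" where
  "Ist D S = (\<Sum>v<ncr D. fst S v)"

definition tau :: "('c,'g) diagram \<Rightarrow> 'c estate \<Rightarrow> int" where
  "tau D S = (\<Sum>c\<in>{c\<in>circles D (fst S). trivial D c}. snd S c)"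

definition Jst :: "('c,'g) diagram \<Rightarrow> 'c estate \<Rightarrow> int" where
  "Jst D S = Ist D S + 2 * tau D S"

text \<open>Psi(S) in Z C(F), represented as a coefficient function 'g => int.\<close>
definition Psi :: "('c,'g) diagram \<Rightarrow> 'c estate \<Rightarrow> 'g \<Rightarrow> int" where
  "Psi D S = (\<lambda>g. \<Sum>c\<in>{c\<in>circles D (fst S). \<not> bounding D c \<and> hclass D c = g}. snd S c)"

definition inc :: "('c,'g) diagram \<Rightarrow> 'c estate \<Rightarrow> 'c estate \<Rightarrow> nat \<Rightarrow> int" where
  "inc D S S' v = (if v < ncr D \<and> fst S v = 1 \<and> fst S' v = -1
      \<and> (\<forall>u<ncr D. u \<noteq> v \<longrightarrow> fst S u = fst S' u)
      \<and> (\<forall>c\<in>circles D (fst S) \<inter> circles D (fst S'). snd S c = snd S' c)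
      \<and> Jst D S = Jst D S' \<and> Psi D S = Psi D S' then 1 else 0)"

definition tneg :: "('c,'g) diagram \<Rightarrow> 'c estate \<Rightarrow> nat \<Rightarrow> nat" where
  "tneg D S v = card {u. v < u \<and> u < ncr D \<and> fst S u = -1}"

definition tpos :: "('c,'g) diagram \<Rightarrow> 'c estate \<Rightarrow> nat \<Rightarrow> nat" where
  "tpos D S v = card {u. v < u \<and> u < ncr D \<and> fst S u = 1}"

type_synonym 'c chain = "'c estate \<Rightarrow> int"

definition Cijs :: "('c,'g) diagram \<Rightarrow> int \<Rightarrow> int \<Rightarrow> ('g \<Rightarrow> int) \<Rightarrow> 'c chain set" where
  "Cijs D i j s = {x. \<forall>S. x S \<noteq> 0 \<longrightarrow>
      S \<in> estates D \<and> Ist D S = i \<and> Jst D S = j \<and> Psi D S = s}"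

definition dv :: "('c,'g) diagram \<Rightarrow> nat \<Rightarrow> 'c chain \<Rightarrow> 'c chain" where
  "dv D v x = (\<lambda>S'. if S' \<in> estates D then (\<Sum>S\<in>estates D. x S * inc D S S' v) else 0)"

definition dplus :: "('c,'g) diagram \<Rightarrow> 'c chain \<Rightarrow> 'c chain" where
  "dplus D x = (\<lambda>T'. if T' \<in> estates D then
      (\<Sum>T\<in>estates D. x T * (\<Sum>w<ncr D. (-1) ^ tpos D T w * inc D T T' w)) else 0)"

definition dtilde :: "('c,'g) diagram \<Rightarrow> 'c chain \<Rightarrow> 'c chain" where
  "dtilde D x = (\<lambda>S'. if S' \<in> estates D then
      (\<Sum>S\<in>estates D. x S * (\<Sum>v<ncr D. (-1) ^ tneg D S v * inc D S' S v)) else 0)"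

definition phi_st :: "'c estate \<Rightarrow> 'c estate" where
  "phi_st S = (\<lambda>v. - fst S v, \<lambda>c. - snd S c)"

definition phi :: "('c,'g) diagram \<Rightarrow> 'c chain \<Rightarrow> 'c chain" where
  "phi D x = (\<lambda>T. \<Sum>S\<in>{S\<in>estates D. phi_st S = T}. x S)"

end

theory Submission
  imports Defs
begin

text \<open>Negating all markers and all labels is a bijection \<phi> from the enhanced states of D
  to those of its mirror; it negates I, J and \<Psi>, turns t into t+, and reverses
  incidences: [\<phi> S : \<phi> S']_v = [S' : S]_v. Reindexing the sum defining d~ along \<phi>
  therefore gives d+. Moreover a nonzero incidence [S' : S]_v changes exactly one marker
  from -1 to +1 while keeping J and \<Psi>, so d~ raises I by 2 and preserves J and \<Psi>.\<close>

lemma mirror_simps [simp]: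
  "ncr (mirror D) = ncr D" "trivial (mirror D) = trivial D"
  "bounding (mirror D) = bounding D" "hclass (mirror D) = hclass D"
  "circles (mirror D) \<sigma> = circles D (\<lambda>v. - \<sigma> v)"
  by (simp_all add: mirror_def)

lemma mirror_mirror [simp]: "mirror (mirror D) = D"
  by (simp add: mirror_def)

lemma phi_st_phi_st [simp]: "phi_st (phi_st S) = S"
  by (simp add: phi_st_def)

lemma phi_st_simps [simp]:
  "fst (phi_st S) = (\<lambda>v. - fst S v)" "snd (phi_st S) = (\<lambda>c. - snd S c)"
  by (simp_all add: phi_st_def)

lemma phi_st_in_estates_mirror: "S \<in> estates D \<Longrightarrow> phi_st S \<in> estates (mirror D)"
  by (cases S) (auto simp: estates_def markers_def phi_st_def)

lemma phi_st_in_estates_iff: "phi_st T \<in> estates D \<longleftrightarrow> T \<in> estates (mirror D)"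
  using phi_st_in_estates_mirror[of T "mirror D"] phi_st_in_estates_mirror[of "phi_st T" D]
  by auto

lemma bij_betw_phi_st: "bij_betw phi_st (estates D) (estates (mirror D))"
proof (rule bij_betw_byWitness[where f' = phi_st])
  show "phi_st ` estates (mirror D) \<subseteq> estates D"
    using phi_st_in_estates_iff by blast
qed (auto intro: phi_st_in_estates_mirror)

lemma phi_apply: "phi D x T = (if T \<in> estates (mirror D) then x (phi_st T) else 0)"
proof -
  have "{S \<in> estates D. phi_st S = T} = (if T \<in> estates (mirror D) then {phi_st T} else {})"
    using phi_st_in_estates_iff[of T D] phi_st_in_estates_mirror[of _ D] by auto
  then show ?thesis
    by (simp add: phi_def)
qed

lemma Ist_mirror_phi_st: "Ist (mirror D) (phi_st S) = - Ist D S"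
  by (simp add: Ist_def sum_negf)

lemma Jst_mirror_phi_st: "Jst (mirror D) (phi_st S) = - Jst D S"
  by (simp add: Jst_def tau_def Ist_mirror_phi_st sum_negf)

lemma Psi_mirror_phi_st: "Psi (mirror D) (phi_st S) = - Psi D S"
  by (rule ext) (simp add: Psi_def sum_negf)

lemma tpos_mirror_phi_st: "tpos (mirror D) (phi_st S) w = tneg D S w"
  unfolding tpos_def tneg_def by (rule arg_cong[where f = card]) auto

lemma inc_mirror_phi_st: "inc (mirror D) (phi_st S) (phi_st S') w = inc D S' S w"
proof -
  have "(- Psi D S = - Psi D S') = (Psi D S = Psi D S')"
    by (auto simp: fun_eq_iff)
  then show ?thesis
    unfolding inc_def Jst_mirror_phi_st Psi_mirror_phi_st by auto
qed

lemma CijsD: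
  assumes "x \<in> Cijs D i j s" and "x S \<noteq> 0"
  shows "S \<in> estates D" "Ist D S = i" "Jst D S = j" "Psi D S = s"
  using assms unfolding Cijs_def by blast+

lemma phi_Cijs:
  assumes "x \<in> Cijs D i j s"
  shows "phi D x \<in> Cijs (mirror D) (- i) (- j) (- s)"
  unfolding Cijs_def
proof (intro CollectI allI impI)
  fix T
  assume "phi D x T \<noteq> 0"
  then have T: "T \<in> estates (mirror D)" and "x (phi_st T) \<noteq> 0"
    by (auto simp: phi_apply split: if_splits)
  with assms have "Ist D (phi_st T) = i" "Jst D (phi_st T) = j" "Psi D (phi_st T) = s"
    by (blast dest: CijsD)+
  with T show "T \<in> estates (mirror D) \<and> Ist (mirror D) T = - i
      \<and> Jst (mirror D) T = - j \<and> Psi (mirror D) T = - s"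
    using Ist_mirror_phi_st[of "mirror D" T] Jst_mirror_phi_st[of "mirror D" T]
      Psi_mirror_phi_st[of "mirror D" T]
    by (simp add: fun_eq_iff)
qed

lemma Ist_inc_nonzero:
  assumes "inc D S S' v \<noteq> 0"
  shows "Ist D S = Ist D S' + 2"
proof -
  from assms have v: "v < ncr D" "fst S v = 1" "fst S' v = -1"
    and others: "\<forall>u<ncr D. u \<noteq> v \<longrightarrow> fst S u = fst S' u"
    by (auto simp: inc_def split: if_splits)
  have "(\<Sum>u\<in>{..<ncr D} - {v}. fst S u) = (\<Sum>u\<in>{..<ncr D} - {v}. fst S' u)"
    using others by (intro sum.cong) auto
  moreover have "Ist D S = fst S v + (\<Sum>u\<in>{..<ncr D} - {v}. fst S u)"
    and "Ist D S' = fst S' v + (\<Sum>u\<in>{..<ncr D} - {v}. fst S' u)"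
    unfolding Ist_def using v(1) by (simp_all add: sum.remove)
  ultimately show ?thesis
    using v by simp
qed

lemma dtilde_Cijs:
  assumes "x \<in> Cijs D i j s"
  shows "dtilde D x \<in> Cijs D (i + 2) j s"
  unfolding Cijs_def
proof (intro CollectI allI impI)
  fix S'
  assume nonzero: "dtilde D x S' \<noteq> 0"
  then have S': "S' \<in> estates D"
    by (auto simp: dtilde_def split: if_splits)
  with nonzero obtain S where
    "x S * (\<Sum>v<ncr D. (-1) ^ tneg D S v * inc D S' S v) \<noteq> 0"
    unfolding dtilde_def by (auto elim: sum.not_neutral_contains_not_neutral)
  then obtain v where "x S \<noteq> 0" and inc: "inc D S' S v \<noteq> 0"
    by (auto elim: sum.not_neutral_contains_not_neutral)
  with assms have "Ist D S = i" "Jst D S = j" "Psi D S = s"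
    by (blast dest: CijsD)+
  moreover from inc have "Jst D S' = Jst D S" "Psi D S' = Psi D S"
    by (auto simp: inc_def split: if_splits)
  ultimately show "S' \<in> estates D \<and> Ist D S' = i + 2 \<and> Jst D S' = j \<and> Psi D S' = s"
    using S' Ist_inc_nonzero[OF inc] by simp
qed

lemma phi_dtilde: "phi D (dtilde D x) = dplus (mirror D) (phi D x)"
proof
  fix T'
  show "phi D (dtilde D x) T' = dplus (mirror D) (phi D x) T'"
  proof (cases "T' \<in> estates (mirror D)")
    case False
    then show ?thesis
      by (simp add: phi_apply dplus_def)
  next
    case True
    have "dplus (mirror D) (phi D x) T' = (\<Sum>T\<in>estates (mirror D).
        phi D x T * (\<Sum>w<ncr D. (-1) ^ tpos (mirror D) T w * inc (mirror D) T T' w))"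
      using True by (simp add: dplus_def)
    also have "\<dots> = (\<Sum>S\<in>estates D. phi D x (phi_st S) * (\<Sum>w<ncr D.
        (-1) ^ tpos (mirror D) (phi_st S) w * inc (mirror D) (phi_st S) T' w))"
      by (rule sum.reindex_bij_betw[OF bij_betw_phi_st, symmetric])
    also have "\<dots> = (\<Sum>S\<in>estates D.
        x S * (\<Sum>w<ncr D. (-1) ^ tneg D S w * inc D (phi_st T') S w))"
    proof (rule sum.cong)
      fix S
      assume "S \<in> estates D"
      then have "phi D x (phi_st S) = x S"
        by (simp add: phi_apply phi_st_in_estates_mirror)
      moreover have "inc (mirror D) (phi_st S) T' w = inc D (phi_st T') S w" for w
        using inc_mirror_phi_st[of D S "phi_st T'"] by simp
      ultimately show "phi D x (phi_st S) * (\<Sum>w<ncr D.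
          (-1) ^ tpos (mirror D) (phi_st S) w * inc (mirror D) (phi_st S) T' w)
        = x S * (\<Sum>w<ncr D. (-1) ^ tneg D S w * inc D (phi_st T') S w)"
        by (simp add: tpos_mirror_phi_st)
    qed simp
    also have "\<dots> = phi D (dtilde D x) T'"
      using True by (simp add: phi_apply dtilde_def phi_st_in_estates_iff)
    finally show ?thesis ..
  qed
qed

theorem proposition9p3:
  fixes D :: "('c, 'g) diagram"
    and i j :: int and s :: "'g \<Rightarrow> int" and x :: "'c chain"
  assumes "wf_diagram D"
    and "x \<in> Cijs D i j s"
  shows "phi D x \<in> Cijs (mirror D) (- i) (- j) (- s)
      \<and> dtilde D x \<in> Cijs D (i + 2) j s
      \<and> phi D (dtilde D x) \<in> Cijs (mirror D) (- i - 2) (- j) (- s)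
      \<and> phi D (dtilde D x) = dplus (mirror D) (phi D x)"
proof -
  have "dtilde D x \<in> Cijs D (i + 2) j s"
    using assms(2) by (rule dtilde_Cijs)
  then have "phi D (dtilde D x) \<in> Cijs (mirror D) (- i - 2) (- j) (- s)"
    using phi_Cijs[of "dtilde D x" D "i + 2" j s] by simp
  with \<open>dtilde D x \<in> Cijs D (i + 2) j s\<close> show ?thesis
    using phi_Cijs[OF assms(2)] phi_dtilde by blast
qed

end
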